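(* Let $u^1,\dots,u^M$ be coherent utilities on $L^0$ with determining sets $\mathcal{D}^1,\dots,\mathcal{D}^M$, and $\rho^m=-u^m$. Let $X=(X^1,\dots,X^d)$ with $X^i\in\bigcap_mL^1_w(\mathcal{D}^m)$, and assume $u^m(\langle h,X\rangle)<0$ for all $h\in\mathbb{R}^d\setminus\{0\}$ and all $m$. Let $E\in\mathbb{R}^d\setminus\{0\}$ and $c^1,\dots,c^M\in(0,\infty)$. Set $G^m=\mathrm{cl}\{\mathsf{E}_\mathsf{Q}X:\mathsf{Q}\in\mathcal{D}^m\}\subseteq\mathbb{R}^d$ and $G=\mathrm{conv}\{G^m/c^m:m=1,\dots,M\}$ (a convex compact set containing $0$ in its interior). Let $T$ be the point of the boundary of $G$ on the ray $\{-tE:t>0\}$, and let $N$ be the set of inner normals to $G$ at $T$, i.e. $N=\{h\in\mathbb{R}^d:\langle h,x\rangle\ge\langle h,T\rangle\ \forall x\in G\}$. Then the set of solutions of the problem $$\langle h,E\rangle\to\max\quad\text{over }h\in\mathbb{R}^d\text{ subject to }\rho^m(\langle h,X\rangle)\le c^m,\ m=1,\dots,M,$$ is $\{h\in N:\langle h,T\rangle=-1\}$, and the maximal value of $\langle h,E\rangle$ is $|E|/|T|$.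
   Context: Let $(\Omega,\mathcal{F},\mathsf{P})$ be a probability space, $L^0$ the space of all real random variables, and $\mathcal{P}$ the set of probability measures on $\mathcal{F}$ absolutely continuous with respect to $\mathsf{P}$. For $\mathsf{Q}\in\mathcal{P}$ and $X\in L^0$, $\mathsf{E}_\mathsf{Q}X:=\mathsf{E}_\mathsf{Q}X^+-\mathsf{E}_\mathsf{Q}X^-$ with the convention $\infty-\infty=-\infty$ (for a vector $X$, $\mathsf{E}_\mathsf{Q}X$ is taken componentwise). A coherent utility on $L^0$ is a map $u:L^0\to[-\infty,\infty]$ of the form $u(X)=\inf_{\mathsf{Q}\in\mathcal{D}}\mathsf{E}_\mathsf{Q}X$ for a nonempty $\mathcal{D}\subseteq\mathcal{P}$; its determining set is the largest such set, $\{\mathsf{Q}\in\mathcal{P}:\mathsf{E}_\mathsf{Q}X\ge u(X)\ \forall X\in L^0\}$. For a coherent utility $u$ with determining set $\mathcal{D}$, $L^1_w(\mathcal{D})=\{X\in L^0:u(X)>-\infty,\ u(-X)>-\infty\}$. $\mathrm{cl}$ denotes closure and $\mathrm{conv}$ convex hull. *)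

theory Defs
  imports "HOL-Probability.Probability"
begin

definition Pset :: "'a measure \<Rightarrow> 'a measure set" where
  "Pset P = {Q. sets Q = sets P \<and> prob_space Q \<and> absolutely_continuous P Q}"

text \<open>Expectation E_Q X = E_Q X^+ - E_Q X^- with the convention infinity - infinity = -infinity.\<close>
definition EQ :: "'a measure \<Rightarrow> ('a \<Rightarrow> real) \<Rightarrow> ereal" where
  "EQ Q X = (let p = enn2ereal (\<integral>\<^sup>+ \<omega>. ennreal (max (X \<omega>) 0) \<partial>Q);
                 n = enn2ereal (\<integral>\<^sup>+ \<omega>. ennreal (max (- X \<omega>) 0) \<partial>Q)
             in if n = \<infinity> then - \<infinity> else p - n)"

definition EQvec :: "'a measure \<Rightarrow> ('a \<Rightarrow> real ^ 'd) \<Rightarrow> real ^ 'd" where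
  "EQvec Q X = (\<chi> i. real_of_ereal (EQ Q (\<lambda>\<omega>. X \<omega> $ i)))"

definition coherent_utility :: "'a measure \<Rightarrow> (('a \<Rightarrow> real) \<Rightarrow> ereal) \<Rightarrow> bool" where
  "coherent_utility P u \<longleftrightarrow>
     (\<exists>D. D \<noteq> {} \<and> D \<subseteq> Pset P \<and>
        (\<forall>X \<in> borel_measurable P. u X = (INF Q\<in>D. EQ Q X)))"

definition detset :: "'a measure \<Rightarrow> (('a \<Rightarrow> real) \<Rightarrow> ereal) \<Rightarrow> 'a measure set" where
  "detset P u = {Q \<in> Pset P. \<forall>X \<in> borel_measurable P. EQ Q X \<ge> u X}"

definition L1w :: "'a measure \<Rightarrow> 'a measure set \<Rightarrow> ('a \<Rightarrow> real) set" where
  "L1w P D = {X \<in> borel_measurable P.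
      (INF Q\<in>D. EQ Q X) > - \<infinity> \<and> (INF Q\<in>D. EQ Q (\<lambda>\<omega>. - X \<omega>)) > - \<infinity>}"

end

theory Submission
  imports Defs
begin

text \<open>Under every measure of a determining set expectation is linear on the span of the
  components of X, so h is feasible iff h \<bullet> q \<ge> - c m for every mean vector q of D m,
  that is, iff h \<ge> -1 on G. Since E is a positive multiple of -T, maximising h \<bullet> E over
  this set amounts to minimising h \<bullet> T. For feasible h one has h \<bullet> T \<ge> -1 because T lies
  in the closure of G, with equality exactly for the inner normals at T normalised by
  h \<bullet> T = -1. Such normals exist by the supporting hyperplane theorem, and they can be
  normalised because 0 is an interior point of G: every nonzero h is negative somewhere
  on G by the hypothesis on the utilities.\<close>

lemma EQ_eq_nn_integrals:
  "EQ Q Y = (let p = enn2ereal (\<integral>\<^sup>+ \<omega>. ennreal (Y \<omega>) \<partial>Q);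
                 n = enn2ereal (\<integral>\<^sup>+ \<omega>. ennreal (- Y \<omega>) \<partial>Q)
             in if n = \<infinity> then - \<infinity> else p - n)"
proof -
  have "ennreal (max r 0) = ennreal r" for r :: real
    by (simp add: max_def ennreal_neg)
  then show ?thesis
    unfolding EQ_def by simp
qed

lemma enn2ereal_eq_ereal_enn2real:
  assumes "x < top"
  shows "enn2ereal x = ereal (enn2real x)"
proof -
  have "enn2ereal x = enn2ereal (ennreal (enn2real x))"
    using assms by simp
  also have "\<dots> = ereal (enn2real x)"
    by (simp add: enn2ereal_ennreal)
  finally show ?thesis .
qed

lemma EQ_eq_integral:
  assumes "integrable Q Y"
  shows "EQ Q Y = ereal (integral\<^sup>L Q Y)"
proof -
  have "(\<integral>\<^sup>+ x. ennreal (Y x) \<partial>Q) < \<infinity>" and "(\<integral>\<^sup>+ x. ennreal (- Y x) \<partial>Q) < \<infinity>"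
    using assms unfolding real_integrable_def by (simp_all add: less_top)
  then show ?thesis
    by (simp add: EQ_eq_nn_integrals real_lebesgue_integral_def[OF assms] enn2ereal_eq_ereal_enn2real)
qed

lemma integrable_if_EQ_gt_MInfty:
  assumes "Y \<in> borel_measurable Q" "EQ Q Y > - \<infinity>" "EQ Q (\<lambda>\<omega>. - Y \<omega>) > - \<infinity>"
  shows "integrable Q Y"
  using assms by (auto simp: real_integrable_def EQ_eq_nn_integrals Let_def top_unique)

lemma coherent_utility_eq_INF_detset:
  assumes "coherent_utility P u" "Y \<in> borel_measurable P"
  shows "u Y = (INF Q\<in>detset P u. EQ Q Y)"
proof (rule antisym)
  show "u Y \<le> (INF Q\<in>detset P u. EQ Q Y)"
    using assms(2) unfolding detset_def by (blast intro: INF_greatest)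
  obtain D where D: "D \<subseteq> Pset P" "\<And>Z. Z \<in> borel_measurable P \<Longrightarrow> u Z = (INF Q\<in>D. EQ Q Z)"
    using assms(1) unfolding coherent_utility_def by blast
  have "D \<subseteq> detset P u"
  proof
    fix Q assume "Q \<in> D"
    then have "u Z \<le> EQ Q Z" if "Z \<in> borel_measurable P" for Z
      unfolding D(2)[OF that] by (rule INF_lower)
    then show "Q \<in> detset P u"
      using \<open>Q \<in> D\<close> D(1) unfolding detset_def by blast
  qed
  then have "(INF Q\<in>detset P u. EQ Q Y) \<le> (INF Q\<in>D. EQ Q Y)"
    by (rule INF_superset_mono) simp
  also have "\<dots> = u Y"
    using D(2)[OF assms(2)] by simp
  finally show "(INF Q\<in>detset P u. EQ Q Y) \<le> u Y" .
qed

lemma integrable_if_L1w: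
  assumes "Q \<in> D" "D \<subseteq> Pset P" "Y \<in> L1w P D"
  shows "integrable Q Y"
proof (rule integrable_if_EQ_gt_MInfty)
  have "sets Q = sets P"
    using assms(1,2) unfolding Pset_def by blast
  moreover have "Y \<in> borel_measurable P"
    using assms(3) by (simp add: L1w_def)
  ultimately show "Y \<in> borel_measurable Q"
    using measurable_cong_sets[OF _ refl] by blast
  have "(INF Q\<in>D. EQ Q Y) \<le> EQ Q Y" "(INF Q\<in>D. EQ Q (\<lambda>\<omega>. - Y \<omega>)) \<le> EQ Q (\<lambda>\<omega>. - Y \<omega>)"
    using assms(1) by (blast intro: INF_lower)+
  moreover have "(INF Q\<in>D. EQ Q Y) > - \<infinity>" "(INF Q\<in>D. EQ Q (\<lambda>\<omega>. - Y \<omega>)) > - \<infinity>"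
    using assms(3) by (simp_all add: L1w_def)
  ultimately show "EQ Q Y > - \<infinity>" and "EQ Q (\<lambda>\<omega>. - Y \<omega>) > - \<infinity>"
    by order+
qed

lemma EQ_inner_eq_inner_EQvec:
  fixes X :: "'a \<Rightarrow> real ^ 'd"
  assumes "\<And>i. integrable Q (\<lambda>\<omega>. X \<omega> $ i)"
  shows "EQ Q (\<lambda>\<omega>. h \<bullet> X \<omega>) = ereal (h \<bullet> EQvec Q X)"
proof -
  have "EQ Q (\<lambda>\<omega>. h \<bullet> X \<omega>) = ereal (\<Sum>i\<in>UNIV. h $ i * integral\<^sup>L Q (\<lambda>\<omega>. X \<omega> $ i))"
    using assms by (simp add: inner_vec_def EQ_eq_integral integrable_sum integral_sum)
  also have "\<dots> = ereal (h \<bullet> EQvec Q X)"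
    using assms by (simp add: inner_vec_def EQvec_def EQ_eq_integral)
  finally show ?thesis .
qed

lemma coherent_utility_inner_eq_INF:
  fixes X :: "'a \<Rightarrow> real ^ 'd"
  assumes "coherent_utility P u" "\<And>i. (\<lambda>\<omega>. X \<omega> $ i) \<in> L1w P (detset P u)"
  shows "u (\<lambda>\<omega>. h \<bullet> X \<omega>) = (INF Q\<in>detset P u. ereal (h \<bullet> EQvec Q X))"
proof -
  have "(\<lambda>\<omega>. X \<omega> $ i) \<in> borel_measurable P" for i
    using assms(2) by (simp add: L1w_def)
  then have "(\<lambda>\<omega>. h \<bullet> X \<omega>) \<in> borel_measurable P"
    unfolding inner_vec_def by (intro borel_measurable_sum borel_measurable_times) auto
  then have "u (\<lambda>\<omega>. h \<bullet> X \<omega>) = (INF Q\<in>detset P u. EQ Q (\<lambda>\<omega>. h \<bullet> X \<omega>))"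
    by (rule coherent_utility_eq_INF_detset[OF assms(1)])
  also have "\<dots> = (INF Q\<in>detset P u. ereal (h \<bullet> EQvec Q X))"
  proof (rule INF_cong[OF refl])
    fix Q assume "Q \<in> detset P u"
    moreover have "detset P u \<subseteq> Pset P"
      unfolding detset_def by blast
    ultimately have "integrable Q (\<lambda>\<omega>. X \<omega> $ i)" for i
      using assms(2) by (rule integrable_if_L1w)
    then show "EQ Q (\<lambda>\<omega>. h \<bullet> X \<omega>) = ereal (h \<bullet> EQvec Q X)"
      by (rule EQ_inner_eq_inner_EQvec)
  qed
  finally show ?thesis .
qed

lemma coherent_utility_inner_ge_iff:
  fixes X :: "'a \<Rightarrow> real ^ 'd"
  assumes "coherent_utility P u" "\<And>i. (\<lambda>\<omega>. X \<omega> $ i) \<in> L1w P (detset P u)"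
  shows "- u (\<lambda>\<omega>. h \<bullet> X \<omega>) \<le> ereal r \<longleftrightarrow> (\<forall>Q\<in>detset P u. - r \<le> h \<bullet> EQvec Q X)"
  using ereal_uminus_le_reorder[of "u (\<lambda>\<omega>. h \<bullet> X \<omega>)" "ereal r"]
  by (simp add: coherent_utility_inner_eq_INF[OF assms] le_INF_iff)

lemma coherent_utility_inner_less_0_iff:
  fixes X :: "'a \<Rightarrow> real ^ 'd"
  assumes "coherent_utility P u" "\<And>i. (\<lambda>\<omega>. X \<omega> $ i) \<in> L1w P (detset P u)"
  shows "u (\<lambda>\<omega>. h \<bullet> X \<omega>) < 0 \<longleftrightarrow> (\<exists>Q\<in>detset P u. h \<bullet> EQvec Q X < 0)"
  by (simp add: coherent_utility_inner_eq_INF[OF assms] INF_less_iff)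

lemma inner_ge_on_convex_hull_scaled_closures_iff:
  fixes A :: "nat \<Rightarrow> 'a::real_inner set"
  assumes "\<And>m. m < K \<Longrightarrow> c m > 0"
  shows "(\<forall>y\<in>convex hull (\<Union>m<K. (\<lambda>x. x /\<^sub>R c m) ` closure (A m)). -1 \<le> h \<bullet> y)
    \<longleftrightarrow> (\<forall>m<K. \<forall>a\<in>A m. - c m \<le> h \<bullet> a)"
proof -
  have scaled: "-1 \<le> h \<bullet> (x /\<^sub>R c m) \<longleftrightarrow> - c m \<le> h \<bullet> x" if "m < K" for m x
    using assms[OF that] by (simp add: field_simps)
  have closure: "closure (A m) \<subseteq> {x. - c m \<le> h \<bullet> x} \<longleftrightarrow> A m \<subseteq> {x. - c m \<le> h \<bullet> x}" for m
    using closure_minimal[OF _ closed_halfspace_ge] closure_subset by (metis subset_trans)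
  have "(\<forall>y\<in>convex hull (\<Union>m<K. (\<lambda>x. x /\<^sub>R c m) ` closure (A m)). -1 \<le> h \<bullet> y)
      \<longleftrightarrow> convex hull (\<Union>m<K. (\<lambda>x. x /\<^sub>R c m) ` closure (A m)) \<subseteq> {y. -1 \<le> h \<bullet> y}"
    by blast
  also have "\<dots> \<longleftrightarrow> (\<Union>m<K. (\<lambda>x. x /\<^sub>R c m) ` closure (A m)) \<subseteq> {y. -1 \<le> h \<bullet> y}"
    by (rule subset_hull) (rule convex_halfspace_ge)
  also have "\<dots> \<longleftrightarrow> (\<forall>m<K. \<forall>x\<in>closure (A m). -1 \<le> h \<bullet> (x /\<^sub>R c m))"
    by blast
  also have "\<dots> \<longleftrightarrow> (\<forall>m<K. closure (A m) \<subseteq> {x. - c m \<le> h \<bullet> x})"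
    using scaled by (auto simp: subset_iff simp del: inner_scaleR_right)
  also have "\<dots> \<longleftrightarrow> (\<forall>m<K. \<forall>a\<in>A m. - c m \<le> h \<bullet> a)"
    by (auto simp: closure)
  finally show ?thesis .
qed

lemma inner_less_0_on_convex_hull_scaled_closures:
  fixes A :: "nat \<Rightarrow> 'a::real_inner set"
  assumes "m < K" "c m > 0" "a \<in> A m" "h \<bullet> a < 0"
  shows "\<exists>y\<in>convex hull (\<Union>m<K. (\<lambda>x. x /\<^sub>R c m) ` closure (A m)). h \<bullet> y < 0"
proof
  show "a /\<^sub>R c m \<in> convex hull (\<Union>m<K. (\<lambda>x. x /\<^sub>R c m) ` closure (A m))"
    using assms(1,3) by (intro hull_inc UN_I[of m]) (auto intro: closure_subset[THEN subsetD])
  show "h \<bullet> (a /\<^sub>R c m) < 0"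
    using assms(2,4) by (simp add: mult_pos_neg)
qed

lemma supporting_hyperplane_frontier:
  fixes S :: "'a::euclidean_space set"
  assumes "convex S" "x \<in> frontier S"
  obtains a where "a \<noteq> 0" "\<And>y. y \<in> S \<Longrightarrow> a \<bullet> x \<le> a \<bullet> y"
proof (cases "x \<in> rel_interior S")
  case False
  moreover have "x \<in> closure S"
    using assms(2) by (simp add: frontier_def)
  ultimately obtain a where "a \<noteq> 0" "\<And>y. y \<in> closure S \<Longrightarrow> a \<bullet> x \<le> a \<bullet> y"
    using supporting_hyperplane_relative_frontier[OF assms(1)] by metis
  then show ?thesis
    by (intro that[of a]) (auto intro: closure_subset[THEN subsetD])
next
  case True
  text \<open>A frontier point in the relative interior forces S into a hyperplane.\<close>
  then have "rel_interior S \<noteq> interior S"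
    using assms(2) by (auto simp: frontier_def)
  then have "aff_dim S < DIM('a)"
    using rel_interior_interior aff_dim_lt_full by metis
  then obtain a b where "a \<noteq> 0" "S \<subseteq> {y. a \<bullet> y = b}"
    by (rule aff_lowdim_subset_hyperplane)
  moreover have "x \<in> S"
    using True rel_interior_subset by blast
  ultimately show ?thesis
    by (intro that[of a]) (auto simp: subset_iff)
qed

lemma inner_ge_on_closure:
  assumes "\<forall>y\<in>G. b \<le> h \<bullet> y" "x \<in> closure G"
  shows "b \<le> h \<bullet> x"
  using closure_minimal[of G "{y. b \<le> h \<bullet> y}"] assms by (auto simp: closed_halfspace_ge)

lemma normalized_inner_normal_exists:
  fixes G :: "'a::euclidean_space set"
  assumes "convex G" "T \<in> frontier G" "\<And>h. h \<noteq> 0 \<Longrightarrow> \<exists>y\<in>G. h \<bullet> y < 0"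
  obtains h where "\<forall>x\<in>G. h \<bullet> T \<le> h \<bullet> x" "h \<bullet> T = -1"
proof -
  obtain a where a: "a \<noteq> 0" "\<And>y. y \<in> G \<Longrightarrow> a \<bullet> T \<le> a \<bullet> y"
    using supporting_hyperplane_frontier[OF assms(1,2)] by blast
  have "a \<bullet> T < 0"
    using assms(3)[OF a(1)] a(2) by force
  define h where "h = a /\<^sub>R (- (a \<bullet> T))"
  have "h \<bullet> T \<le> h \<bullet> x" if "x \<in> G" for x
    using a(2)[OF that] \<open>a \<bullet> T < 0\<close> by (simp add: h_def field_simps)
  moreover have "h \<bullet> T = -1"
    using \<open>a \<bullet> T < 0\<close> by (simp add: h_def)
  ultimately show ?thesis
    using that by blast
qed

lemma maximizers_inner_over_polar:
  fixes G :: "'a::euclidean_space set"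
  assumes "convex G" "T \<in> frontier G" "\<And>h. h \<noteq> 0 \<Longrightarrow> \<exists>y\<in>G. h \<bullet> y < 0"
    and "t > 0" "T = - (t *\<^sub>R E)"
    and F: "F = {h. \<forall>y\<in>G. -1 \<le> h \<bullet> y}"
  shows "{h \<in> F. \<forall>h'\<in>F. h' \<bullet> E \<le> h \<bullet> E} = {h. (\<forall>x\<in>G. h \<bullet> T \<le> h \<bullet> x) \<and> h \<bullet> T = -1}"
    and "\<exists>h\<in>F. h \<bullet> E = 1 / t"
    and "\<forall>h\<in>F. h \<bullet> E \<le> 1 / t"
proof -
  have E: "h \<bullet> E = - (h \<bullet> T) / t" for h
    using assms(4,5) by simp
  have "T \<in> closure G"
    using assms(2) by (simp add: frontier_def)
  then have upper: "h \<bullet> E \<le> 1 / t" if "h \<in> F" for h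
  proof -
    have "-1 \<le> h \<bullet> T"
      using that \<open>T \<in> closure G\<close> by (auto simp: F intro: inner_ge_on_closure)
    then show ?thesis
      using assms(4) by (simp add: E field_simps)
  qed
  obtain h0 where h0: "\<forall>x\<in>G. h0 \<bullet> T \<le> h0 \<bullet> x" "h0 \<bullet> T = -1"
    using normalized_inner_normal_exists[OF assms(1-3)] by blast
  then have h0F: "h0 \<in> F" and h0E: "h0 \<bullet> E = 1 / t"
    by (auto simp: F E)
  show "{h \<in> F. \<forall>h'\<in>F. h' \<bullet> E \<le> h \<bullet> E} = {h. (\<forall>x\<in>G. h \<bullet> T \<le> h \<bullet> x) \<and> h \<bullet> T = -1}"
  proof (intro equalityI subsetI)
    fix h assume "h \<in> {h \<in> F. \<forall>h'\<in>F. h' \<bullet> E \<le> h \<bullet> E}"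
    then have "h \<in> F" "h \<bullet> E = 1 / t"
      using upper[of h] h0F h0E by fastforce+
    moreover from this(2) have "h \<bullet> T = -1"
      using assms(4) by (simp add: E field_simps)
    ultimately show "h \<in> {h. (\<forall>x\<in>G. h \<bullet> T \<le> h \<bullet> x) \<and> h \<bullet> T = -1}"
      by (simp add: F)
  next
    fix h assume "h \<in> {h. (\<forall>x\<in>G. h \<bullet> T \<le> h \<bullet> x) \<and> h \<bullet> T = -1}"
    then have "h \<in> F" "h \<bullet> E = 1 / t"
      by (auto simp: F E)
    then show "h \<in> {h \<in> F. \<forall>h'\<in>F. h' \<bullet> E \<le> h \<bullet> E}"
      using upper by auto
  qed
  show "\<exists>h\<in>F. h \<bullet> E = 1 / t"
    using h0F h0E by blast
  show "\<forall>h\<in>F. h \<bullet> E \<le> 1 / t"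
    using upper by blast
qed

theorem theorem4p1:
  fixes P :: "'a measure"
    and K :: nat
    and u :: "nat \<Rightarrow> ('a \<Rightarrow> real) \<Rightarrow> ereal"
    and D :: "nat \<Rightarrow> 'a measure set"
    and X :: "'a \<Rightarrow> real ^ 'd"
    and E :: "real ^ 'd"
    and c :: "nat \<Rightarrow> real"
    and T :: "real ^ 'd"
  assumes P: "prob_space P"
    and K: "K \<ge> 1"
    and coh: "\<And>m. m < K \<Longrightarrow> coherent_utility P (u m)"
    and D: "\<And>m. m < K \<Longrightarrow> D m = detset P (u m)"
    and XL1: "\<And>i m. m < K \<Longrightarrow> (\<lambda>\<omega>. X \<omega> $ i) \<in> L1w P (D m)"
    and neg: "\<And>h m. m < K \<Longrightarrow> h \<noteq> 0 \<Longrightarrow> u m (\<lambda>\<omega>. h \<bullet> X \<omega>) < 0"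
    and E: "E \<noteq> 0"
    and c: "\<And>m. m < K \<Longrightarrow> c m > 0"
    and T: "T \<in> frontier
              (convex hull (\<Union>m<K. (\<lambda>x. x /\<^sub>R c m) ` closure ((\<lambda>Q. EQvec Q X) ` D m)))"
    and Tray: "\<exists>t>0. T = - (t *\<^sub>R E)"
  shows
    "(let G = convex hull (\<Union>m<K. (\<lambda>x. x /\<^sub>R c m) ` closure ((\<lambda>Q. EQvec Q X) ` D m));
          N = {h. \<forall>x\<in>G. h \<bullet> x \<ge> h \<bullet> T};
          feas = {h :: real ^ 'd. \<forall>m<K. - u m (\<lambda>\<omega>. h \<bullet> X \<omega>) \<le> ereal (c m)}
      in {h \<in> feas. \<forall>h'\<in>feas. h' \<bullet> E \<le> h \<bullet> E} = {h \<in> N. h \<bullet> T = -1}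
         \<and> (\<exists>h\<in>feas. h \<bullet> E = norm E / norm T)
         \<and> (\<forall>h\<in>feas. h \<bullet> E \<le> norm E / norm T))"
proof -
  define G where "G = convex hull (\<Union>m<K. (\<lambda>x. x /\<^sub>R c m) ` closure ((\<lambda>Q. EQvec Q X) ` D m))"
  define feas where "feas = {h :: real ^ 'd. \<forall>m<K. - u m (\<lambda>\<omega>. h \<bullet> X \<omega>) \<le> ereal (c m)}"
  have L1: "(\<lambda>\<omega>. X \<omega> $ i) \<in> L1w P (detset P (u m))" if "m < K" for m i
    using XL1[OF that] D[OF that] by simp
  have "h \<in> feas \<longleftrightarrow> (\<forall>m<K. \<forall>q\<in>(\<lambda>Q. EQvec Q X) ` D m. - c m \<le> h \<bullet> q)" for h
    unfolding feas_def using coherent_utility_inner_ge_iff[OF coh L1] D by simp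
  then have feas_G: "feas = {h. \<forall>y\<in>G. -1 \<le> h \<bullet> y}"
    unfolding G_def set_eq_iff by (simp add: inner_ge_on_convex_hull_scaled_closures_iff[OF c])
  have neg_G: "\<exists>y\<in>G. h \<bullet> y < 0" if h: "h \<noteq> 0" for h
  proof -
    obtain Q where "Q \<in> D 0" "h \<bullet> EQvec Q X < 0"
      using neg[OF _ h] coherent_utility_inner_less_0_iff[OF coh L1] D K by force
    then show ?thesis
      unfolding G_def using K c by (intro inner_less_0_on_convex_hull_scaled_closures) auto
  qed
  obtain t where t: "t > 0" "T = - (t *\<^sub>R E)"
    using Tray by blast
  then have "norm E / norm T = 1 / t"
    using E by simp
  moreover have "convex G"
    by (simp add: G_def)
  ultimately show ?thesis
    using maximizers_inner_over_polar[OF _ T[folded G_def] _ t feas_G] neg_G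
    unfolding Let_def G_def[symmetric] feas_def[symmetric] by auto
qed

end
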